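(* Let $A,B$ be effect algebras. The category $\beta_{A,B}$ of bimorphisms from $A,B$ is isomorphic to the category of cocones under the diagram $D_{A,B}\colon\int R(A)\times\int R(B)\to\mathbf{EA}$. Under this isomorphism, $C$-valued bimorphisms correspond exactly to cocones with apex $C$. Explicitly, a bimorphism $h$ corresponds to the cocone whose component at $(g_A,g_B)$, with $g_A\colon 2^{[n]}\to A$ and $g_B\colon 2^{[m]}\to B$, is $$X\mapsto \sum_{(i,j)\in X}h\bigl(g_A(\{i\}),g_B(\{j\})\bigr),\qquad X\subseteq[n]\times[m].$$ Conversely, a cocone $(v)$ corresponds to the bimorphism $h(a,b)=v_{\langle a\rangle,\langle b\rangle}(\{(1,1)\})$, where $\langle a\rangle\colon 2^{[2]}\to A$ is the observable with $\{1\}\mapsto a$ and $\{2\}\mapsto a^\perp$.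
   Context: An effect algebra is a partial algebra $(A;+,0,1)$, with a binary partial operation $+$ and constants $0,1$, satisfying: (E1) if $a+b$ is defined, then $b+a$ is defined and $a+b=b+a$; (E2) if $a+b$ and $(a+b)+c$ are defined, then $b+c$ and $a+(b+c)$ are defined and $(a+b)+c=a+(b+c)$; (E3) for every $a$ there is a unique $a^\perp$ such that $a+a^\perp=1$; (E4) if $a+1$ is defined, then $a=0$. One-element effect algebras are allowed. We write $a\perp b$ when $a+b$ is defined. Morphisms of effect algebras preserve $1$ and defined sums; $\mathbf{EA}$ is their category. Boolean algebras are effect algebras via: $x+y$ is defined iff $x\wedge y=0$, and then $x+y=x\vee y$. For $[n]=\{1,\dots,n\}$, $\mathbf{FinBool}$ is the full subcategory of Boolean algebras on the objects $2^{[n]}$, $n\in\mathbb N$. The category $\int R(A)$ has: - objects: pairs $(2^{[n]},g)$ with $g\colon 2^{[n]}\to A$ an effect-algebra morphism; - arrows $(2^{[n]},g)\to(2^{[n']},g')$: Boolean algebra morphisms $f\colon 2^{[n]}\to 2^{[n']}$ with $g'\circ f=g$. The coproduct of Boolean algebras is denoted $*$, and $2^{[n]}*2^{[m]}$ is identified with $2^{[n]\times[m]}$. For morphisms $s\colon 2^{[n]}\to 2^{[n']}$ and $t\colon 2^{[m]}\to 2^{[m']}$, $$(s*t)(X)=\bigcup_{(i,j)\in X}s(\{i\})\times t(\{j\}).$$ $D_{A,B}\colon\int R(A)\times\int R(B)\to\mathbf{EA}$ sends $\bigl((2^{[n]},g_A),(2^{[m]},g_B)\bigr)$ to $2^{[n]}*2^{[m]}$,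 and sends $(f_A,f_B)$ to $f_A*f_B$. A bimorphism from $A,B$ to $C$ is a map $h\colon A\times B\to C$ satisfying: - $h(1,1)=1$; - $a_1\perp a_2$ implies $h(a_1,b)\perp h(a_2,b)$ and $h(a_1+a_2,b)=h(a_1,b)+h(a_2,b)$; - symmetrically in the second argument. $\beta_{A,B}$ is the category whose objects are bimorphisms from $A,B$ (into any $C$), and whose morphisms $h\to h'$ are $\mathbf{EA}$-morphisms $f$ with $f\circ h=h'$. The category of cocones under $D_{A,B}$ has morphisms given by $\mathbf{EA}$-maps between apexes commuting with all components. *)

theory Defs
  imports Main "HOL-Library.Product_Lexorder"
begin

text \<open>An effect algebra is represented by a carrier set, an orthogonality relation
(definedness of the partial sum), a (total HOL) function giving the sum where defined,
and the constants 0 and 1.\<close>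

record 'a effalg =
  carrier :: "'a set"
  orth    :: "'a \<Rightarrow> 'a \<Rightarrow> bool"
  eplus   :: "'a \<Rightarrow> 'a \<Rightarrow> 'a"
  ezero   :: 'a
  eone    :: 'a

definition effect_algebra :: "'a effalg \<Rightarrow> bool" where
  "effect_algebra E \<longleftrightarrow>
     ezero E \<in> carrier E \<and> eone E \<in> carrier E \<and>
     (\<forall>a b. orth E a b \<longrightarrow> a \<in> carrier E \<and> b \<in> carrier E \<and> eplus E a b \<in> carrier E) \<and>
     (\<forall>a b. orth E a b \<longrightarrow> orth E b a \<and> eplus E a b = eplus E b a) \<and>
     (\<forall>a b c. orth E a b \<and> orth E (eplus E a b) c \<longrightarrow>
        orth E b c \<and> orth E a (eplus E b c) \<and>
        eplus E (eplus E a b) c = eplus E a (eplus E b c)) \<and>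
     (\<forall>a\<in>carrier E. \<exists>!b. b \<in> carrier E \<and> orth E a b \<and> eplus E a b = eone E) \<and>
     (\<forall>a. orth E a (eone E) \<longrightarrow> a = ezero E)"

definition ecompl :: "'a effalg \<Rightarrow> 'a \<Rightarrow> 'a" where
  "ecompl E a = (THE b. b \<in> carrier E \<and> orth E a b \<and> eplus E a b = eone E)"

definition ea_morphism :: "'a effalg \<Rightarrow> 'b effalg \<Rightarrow> ('a \<Rightarrow> 'b) \<Rightarrow> bool" where
  "ea_morphism E F f \<longleftrightarrow>
     (\<forall>a\<in>carrier E. f a \<in> carrier F) \<and>
     f (eone E) = eone F \<and>
     (\<forall>a b. orth E a b \<longrightarrow> orth F (f a) (f b) \<and> f (eplus E a b) = eplus F (f a) (f b))"

definition powerset_ea :: "'i set \<Rightarrow> 'i set effalg" where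
  "powerset_ea S = \<lparr> carrier = Pow S, orth = (\<lambda>X Y. X \<subseteq> S \<and> Y \<subseteq> S \<and> X \<inter> Y = {}),
                      eplus = (\<union>), ezero = {}, eone = S \<rparr>"

definition bool_ea :: "nat \<Rightarrow> nat set effalg" where
  "bool_ea n = powerset_ea {1..n}"

text \<open>\<open>2^[n] * 2^[m]\<close>, identified with \<open>2^([n]\<times>[m])\<close>.\<close>
definition bool2_ea :: "nat \<Rightarrow> nat \<Rightarrow> (nat \<times> nat) set effalg" where
  "bool2_ea n m = powerset_ea ({1..n} \<times> {1..m})"

definition bool_hom :: "nat \<Rightarrow> nat \<Rightarrow> (nat set \<Rightarrow> nat set) \<Rightarrow> bool" where
  "bool_hom n n' f \<longleftrightarrow>
     (\<forall>X. X \<subseteq> {1..n} \<longrightarrow> f X \<subseteq> {1..n'}) \<and>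
     f {} = {} \<and> f {1..n} = {1..n'} \<and>
     (\<forall>X Y. X \<subseteq> {1..n} \<and> Y \<subseteq> {1..n} \<longrightarrow> f (X \<union> Y) = f X \<union> f Y) \<and>
     (\<forall>X Y. X \<subseteq> {1..n} \<and> Y \<subseteq> {1..n} \<longrightarrow> f (X \<inter> Y) = f X \<inter> f Y) \<and>
     (\<forall>X. X \<subseteq> {1..n} \<longrightarrow> f ({1..n} - X) = {1..n'} - f X)"

definition bool_coprod ::
  "(nat set \<Rightarrow> nat set) \<Rightarrow> (nat set \<Rightarrow> nat set) \<Rightarrow> (nat \<times> nat) set \<Rightarrow> (nat \<times> nat) set" where
  "bool_coprod s t X = (\<Union>(i,j)\<in>X. s {i} \<times> t {j})"

definition bimorphism ::
  "'a effalg \<Rightarrow> 'b effalg \<Rightarrow> 'c effalg \<Rightarrow> ('a \<Rightarrow> 'b \<Rightarrow> 'c) \<Rightarrow> bool" where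
  "bimorphism A B C h \<longleftrightarrow>
     (\<forall>a\<in>carrier A. \<forall>b\<in>carrier B. h a b \<in> carrier C) \<and>
     h (eone A) (eone B) = eone C \<and>
     (\<forall>a1 a2 b. orth A a1 a2 \<and> b \<in> carrier B \<longrightarrow>
        orth C (h a1 b) (h a2 b) \<and> h (eplus A a1 a2) b = eplus C (h a1 b) (h a2 b)) \<and>
     (\<forall>a b1 b2. a \<in> carrier A \<and> orth B b1 b2 \<longrightarrow>
        orth C (h a b1) (h a b2) \<and> h a (eplus B b1 b2) = eplus C (h a b1) (h a b2))"

text \<open>An object of \<open>\<integral>R(A)\<close> is a pair \<open>(n, g)\<close> with \<open>g : 2^[n] \<rightarrow> A\<close> an EA morphism.
A cocone with apex C is a family \<open>v n gA m gB : 2^[n]*2^[m] \<rightarrow> C\<close> of EA morphisms, indexed by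
pairs of objects, compatible with all arrows \<open>(fA, fB)\<close> of \<open>\<integral>R(A) \<times> \<integral>R(B)\<close>.\<close>

type_synonym ('a,'b,'c) cocone_fam =
  "nat \<Rightarrow> (nat set \<Rightarrow> 'a) \<Rightarrow> nat \<Rightarrow> (nat set \<Rightarrow> 'b) \<Rightarrow> (nat \<times> nat) set \<Rightarrow> 'c"

definition intR_obj :: "'a effalg \<Rightarrow> nat \<Rightarrow> (nat set \<Rightarrow> 'a) \<Rightarrow> bool" where
  "intR_obj A n g \<longleftrightarrow> ea_morphism (bool_ea n) A g"

definition intR_arrow ::
  "'a effalg \<Rightarrow> nat \<Rightarrow> (nat set \<Rightarrow> 'a) \<Rightarrow> nat \<Rightarrow> (nat set \<Rightarrow> 'a) \<Rightarrow> (nat set \<Rightarrow> nat set) \<Rightarrow> bool" where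
  "intR_arrow A n g n' g' f \<longleftrightarrow>
     intR_obj A n g \<and> intR_obj A n' g' \<and> bool_hom n n' f \<and>
     (\<forall>X. X \<subseteq> {1..n} \<longrightarrow> g' (f X) = g X)"

definition cocone :: "'a effalg \<Rightarrow> 'b effalg \<Rightarrow> 'c effalg \<Rightarrow> ('a,'b,'c) cocone_fam \<Rightarrow> bool" where
  "cocone A B C v \<longleftrightarrow>
     (\<forall>n gA m gB. intR_obj A n gA \<and> intR_obj B m gB \<longrightarrow>
        ea_morphism (bool2_ea n m) C (v n gA m gB)) \<and>
     (\<forall>n gA n' gA' fA m gB m' gB' fB.
        intR_arrow A n gA n' gA' fA \<and> intR_arrow B m gB m' gB' fB \<longrightarrow>
        (\<forall>X. X \<subseteq> {1..n} \<times> {1..m} \<longrightarrow>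
           v n' gA' m' gB' (bool_coprod fA fB X) = v n gA m gB X))"

definition esum :: "'c effalg \<Rightarrow> ('i::linorder \<Rightarrow> 'c) \<Rightarrow> 'i set \<Rightarrow> 'c" where
  "esum C f S = foldr (\<lambda>x acc. eplus C (f x) acc) (sorted_list_of_set S) (ezero C)"

definition cocone_of_bimorphism ::
  "'c effalg \<Rightarrow> ('a \<Rightarrow> 'b \<Rightarrow> 'c) \<Rightarrow> ('a,'b,'c) cocone_fam" where
  "cocone_of_bimorphism C h = (\<lambda>n gA m gB X. esum C (\<lambda>(i,j). h (gA {i}) (gB {j})) X)"

definition observable :: "'a effalg \<Rightarrow> 'a \<Rightarrow> nat set \<Rightarrow> 'a" where
  "observable A a X =
     (if X = {} then ezero A else if X = {1} then a else if X = {2} then ecompl A a else eone A)"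

definition bimorphism_of_cocone ::
  "'a effalg \<Rightarrow> 'b effalg \<Rightarrow> ('a,'b,'c) cocone_fam \<Rightarrow> 'a \<Rightarrow> 'b \<Rightarrow> 'c" where
  "bimorphism_of_cocone A B v = (\<lambda>a b. v 2 (observable A a) 2 (observable B b) {(1,1)})"

end

theory Submission
  imports Defs
begin

text \<open>A bimorphism \<open>h\<close> and a cocone \<open>v\<close> correspond through their values on rectangles,
  \<open>v n gA m gB (S \<times> T) = h (gA S) (gB T)\<close>.
  Given \<open>h\<close>, the component at \<open>(gA, gB)\<close> is the additive map on subsets of \<open>[n] \<times> [m]\<close> with value
  \<open>h (gA {i}) (gB {j})\<close> on the cell \<open>(i, j)\<close>: it is built row by row, because additive maps on
  disjoint sets with orthogonal totals glue, and it equals the finite sum of the statement, because an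
  additive map is the sum of its values on points; naturality holds since both sides are additive and
  agree on cells.
  Given \<open>v\<close>, naturality along the Boolean morphism \<open>2\<^bsup>[2]\<^esup> \<rightarrow> 2\<^bsup>[n]\<^esup>\<close> classifying \<open>S\<close>
  turns \<open>v (S \<times> T)\<close> into the cell \<open>{(1, 1)}\<close> of two observables, which is the rectangle formula;
  biadditivity then comes from the additivity of a component whose first (or second) object is a
  three-outcome observable with outcomes \<open>a\<^sub>1\<close>, \<open>a\<^sub>2\<close>, \<open>(a\<^sub>1 + a\<^sub>2)\<^sup>\<perp>\<close>.\<close>

section \<open>Effect algebras\<close>

locale effect_alg =
  fixes E :: "'a effalg"
  assumes effect_algebra: "effect_algebra E"
begin

lemma zero_closed: "ezero E \<in> carrier E"
  and one_closed: "eone E \<in> carrier E"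
  using effect_algebra unfolding effect_algebra_def by blast+

lemma orth_closed:
  "orth E a b \<Longrightarrow> a \<in> carrier E \<and> b \<in> carrier E \<and> eplus E a b \<in> carrier E"
  using effect_algebra unfolding effect_algebra_def by blast

lemma orth_sym: "orth E a b \<Longrightarrow> orth E b a"
  and eplus_commute: "orth E a b \<Longrightarrow> eplus E a b = eplus E b a"
  using effect_algebra unfolding effect_algebra_def by blast+

lemma eplus_assoc:
  "orth E a b \<Longrightarrow> orth E (eplus E a b) c \<Longrightarrow>
     orth E b c \<and> orth E a (eplus E b c) \<and> eplus E (eplus E a b) c = eplus E a (eplus E b c)"
  using effect_algebra unfolding effect_algebra_def by blast

lemma orth_one_eq_zero: "orth E a (eone E) \<Longrightarrow> a = ezero E"
  using effect_algebra unfolding effect_algebra_def by blast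

lemma ecompl_ex1:
  assumes "a \<in> carrier E"
  shows "\<exists>!b. b \<in> carrier E \<and> orth E a b \<and> eplus E a b = eone E"
proof -
  have "\<forall>a\<in>carrier E. \<exists>!b. b \<in> carrier E \<and> orth E a b \<and> eplus E a b = eone E"
    using effect_algebra unfolding effect_algebra_def by (elim conjE) assumption
  then show ?thesis
    using assms by (rule bspec)
qed

lemma ecompl_spec:
  "a \<in> carrier E \<Longrightarrow>
     ecompl E a \<in> carrier E \<and> orth E a (ecompl E a) \<and> eplus E a (ecompl E a) = eone E"
  unfolding ecompl_def by (rule theI'[OF ecompl_ex1])

lemma ecompl_unique:
  "a \<in> carrier E \<Longrightarrow> b \<in> carrier E \<Longrightarrow> orth E a b \<Longrightarrow> eplus E a b = eone E \<Longrightarrow> b = ecompl E a"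
  unfolding ecompl_def by (rule the1_equality[OF ecompl_ex1, symmetric]) auto

lemma eplus_assoc':
  assumes "orth E b c" "orth E a (eplus E b c)"
  shows "orth E a b \<and> orth E (eplus E a b) c \<and> eplus E (eplus E a b) c = eplus E a (eplus E b c)"
proof -
  have cb: "orth E c b"
    using orth_sym assms(1) by blast
  have "orth E (eplus E c b) a"
    using assms orth_sym eplus_commute by simp
  note cba = eplus_assoc[OF cb this]
  have ab: "orth E a b"
    using cba orth_sym by blast
  have abc: "orth E (eplus E a b) c"
    using cba orth_sym eplus_commute[OF ab] by simp
  have "eplus E (eplus E a b) c = eplus E c (eplus E b a)"
    using eplus_commute[OF abc] eplus_commute[OF ab] by simp
  also have "\<dots> = eplus E (eplus E c b) a"
    using cba by simp
  also have "\<dots> = eplus E a (eplus E b c)"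
    using eplus_commute[OF \<open>orth E (eplus E c b) a\<close>] eplus_commute[OF cb] by simp
  finally show ?thesis using ab abc by blast
qed

lemma one_orth_zero: "orth E (eone E) (ezero E) \<and> eplus E (eone E) (ezero E) = eone E"
proof -
  have "ecompl E (eone E) = ezero E"
    using ecompl_spec[OF one_closed] orth_one_eq_zero orth_sym by blast
  then show ?thesis
    using ecompl_spec[OF one_closed] by simp
qed

lemma zero_right:
  assumes a: "a \<in> carrier E"
  shows "orth E a (ezero E) \<and> eplus E a (ezero E) = a"
proof -
  define b where "b = ecompl E a"
  have b: "b \<in> carrier E" "orth E b a" "eplus E b a = eone E"
    using ecompl_spec[OF a] orth_sym eplus_commute unfolding b_def by auto
  note ba0 = eplus_assoc[OF b(2), of "ezero E"]
  have a0: "orth E a (ezero E)" "orth E b (eplus E a (ezero E))"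
    "eplus E b (eplus E a (ezero E)) = eone E"
    using ba0 one_orth_zero b by auto
  have "eplus E a (ezero E) = ecompl E b"
    using ecompl_unique[OF b(1) _ a0(2,3)] orth_closed[OF a0(1)] by blast
  moreover have "a = ecompl E b"
    using ecompl_unique[OF b(1) a b(2,3)] .
  ultimately show ?thesis using a0 by simp
qed

lemma zero_left: "a \<in> carrier E \<Longrightarrow> orth E (ezero E) a \<and> eplus E (ezero E) a = a"
  using zero_right orth_sym eplus_commute by metis

lemma eplus_left_cancel:
  assumes "orth E a b" "orth E a c" "eplus E a b = eplus E a c"
  shows "b = c"
proof -
  define d where "d = ecompl E (eplus E a b)"
  have d: "orth E (eplus E a b) d" "eplus E (eplus E a b) d = eone E"
    using ecompl_spec orth_closed assms(1) unfolding d_def by blast+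
  have "x = ecompl E (eplus E a d)"
    if x: "orth E a x" "eplus E a x = eplus E a b" for x
  proof -
    have "eplus E x a = eplus E a b"
      using eplus_commute[OF x(1)] x(2) by simp
    then have "orth E (eplus E x a) d" "eplus E (eplus E x a) d = eone E"
      using d by simp_all
    note xad = eplus_assoc[OF orth_sym[OF x(1)] this(1)] this(2)
    show ?thesis
      using ecompl_unique[of "eplus E a d" x] xad orth_closed orth_sym eplus_commute by metis
  qed
  from this[of b] this[of c] show ?thesis
    using assms by simp
qed

lemma idem_eq_zero:
  assumes "orth E x x" "eplus E x x = x"
  shows "x = ezero E"
proof -
  have "x \<in> carrier E"
    using orth_closed assms(1) by blast
  then show ?thesis
    using eplus_left_cancel[OF assms(1), of "ezero E"] zero_right assms(2) by simp
qed

lemma orth_left_summand: "orth E (eplus E a c) b \<Longrightarrow> orth E a c \<Longrightarrow> orth E a b"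
  using eplus_assoc[of c a b] orth_sym eplus_commute by simp

lemma orth_right_summand: "orth E a (eplus E b c) \<Longrightarrow> orth E b c \<Longrightarrow> orth E a b"
  using orth_left_summand orth_sym by blast

lemma eplus_interchange:
  assumes a: "orth E a1 a2" and b: "orth E b1 b2" and ab: "orth E (eplus E a1 a2) (eplus E b1 b2)"
  shows "orth E (eplus E a1 b1) (eplus E a2 b2) \<and>
    eplus E (eplus E a1 a2) (eplus E b1 b2) = eplus E (eplus E a1 b1) (eplus E a2 b2)"
proof -
  note s1 = eplus_assoc[OF a ab]
  note s2 = eplus_assoc'[OF b conjunct1[OF s1]]
  have "orth E (eplus E b1 a2) b2"
    using s2 eplus_commute[of a2 b1] by simp
  note s3 = eplus_assoc[OF orth_sym[OF conjunct1[OF s2]] this]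
  have mid: "eplus E a2 (eplus E b1 b2) = eplus E b1 (eplus E a2 b2)"
    using s2 s3 eplus_commute[of a2 b1] by simp
  note s4 = eplus_assoc'[OF conjunct1[OF conjunct2[OF s3]], of a1]
  show ?thesis
    using s1 s4 mid by simp
qed

end

section \<open>Additive maps on powersets\<close>

definition ea_additive :: "'a effalg \<Rightarrow> 'i set \<Rightarrow> ('i set \<Rightarrow> 'a) \<Rightarrow> bool" where
  "ea_additive E U \<phi> \<longleftrightarrow>
     (\<forall>X Y. X \<subseteq> U \<longrightarrow> Y \<subseteq> U \<longrightarrow> X \<inter> Y = {} \<longrightarrow>
        orth E (\<phi> X) (\<phi> Y) \<and> \<phi> (X \<union> Y) = eplus E (\<phi> X) (\<phi> Y))"

lemma ea_additiveD:
  "ea_additive E U \<phi> \<Longrightarrow> X \<subseteq> U \<Longrightarrow> Y \<subseteq> U \<Longrightarrow> X \<inter> Y = {} \<Longrightarrow>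
     orth E (\<phi> X) (\<phi> Y) \<and> \<phi> (X \<union> Y) = eplus E (\<phi> X) (\<phi> Y)"
  unfolding ea_additive_def by blast

lemma ea_additive_cong:
  "(\<And>X. X \<subseteq> U \<Longrightarrow> \<phi> X = \<psi> X) \<Longrightarrow> ea_additive E U \<phi> \<Longrightarrow> ea_additive E U \<psi>"
  unfolding ea_additive_def by (metis le_sup_iff)

lemma ea_additive_comp:
  assumes "ea_additive E U \<phi>"
    and "\<And>Z. Z \<subseteq> V \<Longrightarrow> \<sigma> Z \<subseteq> U"
    and "\<And>Z1 Z2. Z1 \<subseteq> V \<Longrightarrow> Z2 \<subseteq> V \<Longrightarrow> Z1 \<inter> Z2 = {} \<Longrightarrow>
           \<sigma> Z1 \<inter> \<sigma> Z2 = {} \<and> \<sigma> (Z1 \<union> Z2) = \<sigma> Z1 \<union> \<sigma> Z2"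
  shows "ea_additive E V (\<lambda>Z. \<phi> (\<sigma> Z))"
  unfolding ea_additive_def using assms ea_additiveD[OF assms(1)] by simp

lemma ea_additive_morphism_comp:
  "ea_additive E U \<phi> \<Longrightarrow> ea_morphism E F f \<Longrightarrow> ea_additive F U (\<lambda>Z. f (\<phi> Z))"
  unfolding ea_additive_def ea_morphism_def by simp

lemma ea_morphism_powerset_additive: "ea_morphism (powerset_ea U) E g \<Longrightarrow> ea_additive E U g"
  unfolding ea_additive_def ea_morphism_def powerset_ea_def by simp

lemma esum_empty [simp]: "esum E f {} = ezero E"
  by (simp add: esum_def)

lemma esum_Min:
  "finite S \<Longrightarrow> S \<noteq> {} \<Longrightarrow> esum E f S = eplus E (f (Min S)) (esum E f (S - {Min S}))"
  unfolding esum_def by (subst sorted_list_of_set_nonempty) auto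

lemma esum_cong: "(\<And>x. x \<in> S \<Longrightarrow> f x = g x) \<Longrightarrow> esum E f S = esum E g S"
  unfolding esum_def by (cases "finite S") (auto intro: foldr_cong)

context effect_alg
begin

lemma ea_additive_empty:
  assumes "ea_additive E U \<phi>"
  shows "\<phi> {} = ezero E"
  using ea_additiveD[OF assms, of "{}" "{}"] idem_eq_zero by simp

lemma ea_additive_closed: "ea_additive E U \<phi> \<Longrightarrow> X \<subseteq> U \<Longrightarrow> \<phi> X \<in> carrier E"
  using ea_additiveD[of E U \<phi> X "{}"] orth_closed by blast

lemma ea_additive_eplus:
  assumes \<phi>: "ea_additive E U \<phi>" and \<psi>: "ea_additive E U \<psi>" and orth_U: "orth E (\<phi> U) (\<psi> U)"
  shows "ea_additive E U (\<lambda>Z. eplus E (\<phi> Z) (\<psi> Z))"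
  unfolding ea_additive_def
proof (intro allI impI)
  fix Z1 Z2 assume Z: "Z1 \<subseteq> U" "Z2 \<subseteq> U" "Z1 \<inter> Z2 = {}"
  define Z R where "Z = Z1 \<union> Z2" and "R = U - (Z1 \<union> Z2)"
  have U: "U = Z \<union> R" "Z \<inter> R = {}" "Z \<subseteq> U" "R \<subseteq> U"
    using Z unfolding Z_def R_def by auto
  note \<phi>U = ea_additiveD[OF \<phi> U(3,4,2), folded U(1)]
  note \<psi>U = ea_additiveD[OF \<psi> U(3,4,2), folded U(1)]
  have "orth E (\<phi> Z) (\<psi> U)"
    using orth_left_summand orth_U \<phi>U by auto
  then have "orth E (\<phi> Z) (\<psi> Z)"
    using orth_right_summand \<psi>U by auto
  moreover note \<phi>Z = ea_additiveD[OF \<phi> Z] and \<psi>Z = ea_additiveD[OF \<psi> Z]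
  ultimately show "orth E (eplus E (\<phi> Z1) (\<psi> Z1)) (eplus E (\<phi> Z2) (\<psi> Z2)) \<and>
      eplus E (\<phi> (Z1 \<union> Z2)) (\<psi> (Z1 \<union> Z2)) =
      eplus E (eplus E (\<phi> Z1) (\<psi> Z1)) (eplus E (\<phi> Z2) (\<psi> Z2))"
    using eplus_interchange[of "\<phi> Z1" "\<phi> Z2" "\<psi> Z1" "\<psi> Z2"] unfolding Z_def by simp
qed

lemma ea_additive_indicator:
  assumes "x \<in> carrier E"
  shows "ea_additive E U (\<lambda>Z. if i \<in> Z then x else ezero E)"
  unfolding ea_additive_def using assms zero_left zero_right zero_closed by auto

lemma ea_additive_glue:
  assumes \<phi>: "ea_additive E X \<phi>" and \<psi>: "ea_additive E Y \<psi>"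
    and XY: "X \<inter> Y = {}" and orth_XY: "orth E (\<phi> X) (\<psi> Y)"
  shows "ea_additive E (X \<union> Y) (\<lambda>Z. eplus E (\<phi> (Z \<inter> X)) (\<psi> (Z \<inter> Y)))"
    and "Z \<subseteq> X \<Longrightarrow> eplus E (\<phi> (Z \<inter> X)) (\<psi> (Z \<inter> Y)) = \<phi> Z"
    and "Z \<subseteq> Y \<Longrightarrow> eplus E (\<phi> (Z \<inter> X)) (\<psi> (Z \<inter> Y)) = \<psi> Z"
proof -
  have "ea_additive E (X \<union> Y) (\<lambda>Z. \<phi> (Z \<inter> X))" "ea_additive E (X \<union> Y) (\<lambda>Z. \<psi> (Z \<inter> Y))"
    by (rule ea_additive_comp[OF \<phi>] ea_additive_comp[OF \<psi>]; auto)+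
  moreover have "(X \<union> Y) \<inter> X = X" "(X \<union> Y) \<inter> Y = Y"
    by auto
  ultimately show "ea_additive E (X \<union> Y) (\<lambda>Z. eplus E (\<phi> (Z \<inter> X)) (\<psi> (Z \<inter> Y)))"
    using orth_XY by (intro ea_additive_eplus) simp_all
next
  assume "Z \<subseteq> X"
  then have "Z \<inter> X = Z" "Z \<inter> Y = {}"
    using XY by auto
  then show "eplus E (\<phi> (Z \<inter> X)) (\<psi> (Z \<inter> Y)) = \<phi> Z"
    using zero_right ea_additive_closed[OF \<phi> \<open>Z \<subseteq> X\<close>] ea_additive_empty[OF \<psi>] by simp
next
  assume "Z \<subseteq> Y"
  then have "Z \<inter> X = {}" "Z \<inter> Y = Z"
    using XY by auto
  then show "eplus E (\<phi> (Z \<inter> X)) (\<psi> (Z \<inter> Y)) = \<psi> Z"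
    using zero_left ea_additive_closed[OF \<psi> \<open>Z \<subseteq> Y\<close>] ea_additive_empty[OF \<phi>] by simp
qed

lemma ea_additive_eq_esum:
  assumes \<phi>: "ea_additive E U \<phi>" and "finite X"
  shows "X \<subseteq> U \<Longrightarrow> \<phi> X = esum E (\<lambda>p. \<phi> {p}) X"
  using \<open>finite X\<close>
proof (induction X rule: finite_remove_induct)
  case empty
  then show ?case using ea_additive_empty[OF \<phi>] by simp
next
  case (remove X)
  define m where "m = Min X"
  have m: "m \<in> X"
    using Min_in remove.hyps unfolding m_def by blast
  have "\<phi> X = \<phi> ({m} \<union> (X - {m}))"
    using m by (simp add: insert_absorb)
  also have "\<dots> = eplus E (\<phi> {m}) (\<phi> (X - {m}))"
    using ea_additiveD[OF \<phi>, of "{m}" "X - {m}"] m remove.prems by auto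
  also have "\<dots> = eplus E (\<phi> {m}) (esum E (\<lambda>p. \<phi> {p}) (X - {m}))"
  proof -
    have "X - {m} \<subseteq> U"
      using remove.prems by blast
    then show ?thesis
      using remove.IH[OF m] by simp
  qed
  also have "\<dots> = esum E (\<lambda>p. \<phi> {p}) X"
    using esum_Min[OF remove.hyps(1,2), symmetric] unfolding m_def .
  finally show ?case .
qed

lemma ea_additive_eq_esum_points:
  assumes "ea_additive E U \<phi>" "finite U" "X \<subseteq> U" "\<And>p. p \<in> X \<Longrightarrow> \<phi> {p} = f p"
  shows "\<phi> X = esum E f X"
proof -
  have "\<phi> X = esum E (\<lambda>p. \<phi> {p}) X"
    using ea_additive_eq_esum[OF assms(1) finite_subset[OF assms(3,2)] assms(3)] .
  also have "\<dots> = esum E f X"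
    using assms(4) by (rule esum_cong)
  finally show ?thesis .
qed

lemma esum_singleton: "f p \<in> carrier E \<Longrightarrow> esum E f {p} = f p"
  using zero_right by (simp add: esum_def)

lemma ea_morphism_powerset_iff:
  "ea_morphism (powerset_ea U) E \<phi> \<longleftrightarrow> ea_additive E U \<phi> \<and> \<phi> U = eone E"
proof
  assume "ea_morphism (powerset_ea U) E \<phi>"
  then show "ea_additive E U \<phi> \<and> \<phi> U = eone E"
    using ea_morphism_powerset_additive unfolding ea_morphism_def powerset_ea_def by auto
next
  assume "ea_additive E U \<phi> \<and> \<phi> U = eone E"
  then show "ea_morphism (powerset_ea U) E \<phi>"
    using ea_additive_closed unfolding ea_morphism_def powerset_ea_def ea_additive_def by auto
qed

lemma ea_additive_compl:
  assumes \<phi>: "ea_additive E U \<phi>" and one: "\<phi> U = eone E" and X: "X \<subseteq> U"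
  shows "\<phi> (U - X) = ecompl E (\<phi> X)"
proof -
  have "orth E (\<phi> X) (\<phi> (U - X)) \<and> \<phi> (X \<union> (U - X)) = eplus E (\<phi> X) (\<phi> (U - X))"
    using ea_additiveD[OF \<phi> X, of "U - X"] by blast
  then show ?thesis
    using ecompl_unique ea_additive_closed[OF \<phi>] X one by (simp add: Un_absorb1)
qed

lemma intR_obj_iff: "intR_obj E n g \<longleftrightarrow> ea_additive E {1..n} g \<and> g {1..n} = eone E"
  unfolding intR_obj_def bool_ea_def ea_morphism_powerset_iff ..

end

lemma bool_hom_closed:
  assumes "bool_hom n n' f" "X \<subseteq> {1..n}"
  shows "f X \<subseteq> {1..n'}"
proof -
  have "\<forall>X. X \<subseteq> {1..n} \<longrightarrow> f X \<subseteq> {1..n'}"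
    using assms(1) unfolding bool_hom_def by (elim conjE) assumption
  then show ?thesis
    using assms(2) by blast
qed

lemma bool_hom_disjoint:
  assumes f: "bool_hom n n' f" and "X \<subseteq> {1..n}" "Y \<subseteq> {1..n}" "X \<inter> Y = {}"
  shows "f X \<inter> f Y = {}"
proof -
  have "\<forall>X Y. X \<subseteq> {1..n} \<and> Y \<subseteq> {1..n} \<longrightarrow> f (X \<inter> Y) = f X \<inter> f Y"
    using f unfolding bool_hom_def by (elim conjE) assumption
  then have "f X \<inter> f Y = f (X \<inter> Y)"
    using assms(2,3) by simp
  moreover have "f {} = {}"
    using f unfolding bool_hom_def by (elim conjE) assumption
  ultimately show ?thesis
    using assms(4) by simp
qed

lemma bool_coprod_singleton [simp]: "bool_coprod s t {(i, j)} = s {i} \<times> t {j}"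
  by (simp add: bool_coprod_def)

lemma bool_coprod_union: "bool_coprod s t (X \<union> Y) = bool_coprod s t X \<union> bool_coprod s t Y"
  unfolding bool_coprod_def by blast

lemma bool_coprod_closed:
  assumes "bool_hom n n' s" "bool_hom m m' t" "X \<subseteq> {1..n} \<times> {1..m}"
  shows "bool_coprod s t X \<subseteq> {1..n'} \<times> {1..m'}"
proof -
  have "s {i} \<times> t {j} \<subseteq> {1..n'} \<times> {1..m'}" if "(i, j) \<in> X" for i j
  proof (rule Sigma_mono)
    have "{i} \<subseteq> {1..n}" "{j} \<subseteq> {1..m}"
      using that assms(3) by auto
    then show "s {i} \<subseteq> {1..n'}" "t {j} \<subseteq> {1..m'}"
      using bool_hom_closed[OF assms(1)] bool_hom_closed[OF assms(2)] by simp_all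
  qed
  then show ?thesis
    unfolding bool_coprod_def by blast
qed

lemma bool_coprod_disjoint:
  assumes s: "bool_hom n n' s" and t: "bool_hom m m' t"
    and XY: "X \<subseteq> {1..n} \<times> {1..m}" "Y \<subseteq> {1..n} \<times> {1..m}" "X \<inter> Y = {}"
  shows "bool_coprod s t X \<inter> bool_coprod s t Y = {}"
proof -
  have "s {i} \<times> t {j} \<inter> s {i'} \<times> t {j'} = {}" if "(i, j) \<in> X" "(i', j') \<in> Y" for i j i' j'
  proof -
    have "i \<noteq> i' \<or> j \<noteq> j'"
      using that XY(3) by blast
    moreover have "{i} \<subseteq> {1..n}" "{i'} \<subseteq> {1..n}" "{j} \<subseteq> {1..m}" "{j'} \<subseteq> {1..m}"
      using that XY(1,2) by auto
    ultimately have "s {i} \<inter> s {i'} = {} \<or> t {j} \<inter> t {j'} = {}"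
      using bool_hom_disjoint[OF s, of "{i}" "{i'}"] bool_hom_disjoint[OF t, of "{j}" "{j'}"] by auto
    then show ?thesis by blast
  qed
  moreover have "\<exists>i j i' j'. (i, j) \<in> X \<and> (i', j') \<in> Y \<and> x \<in> s {i} \<times> t {j} \<and> x \<in> s {i'} \<times> t {j'}"
    if "x \<in> bool_coprod s t X" "x \<in> bool_coprod s t Y" for x
    using that unfolding bool_coprod_def by blast
  ultimately show ?thesis
    by blast
qed

section \<open>The cocone of a bimorphism\<close>

locale ea_bimorphism = A: effect_alg A + B: effect_alg B + C: effect_alg C
  for A :: "'a effalg" and B :: "'b effalg" and C :: "'c effalg" +
  fixes h :: "'a \<Rightarrow> 'b \<Rightarrow> 'c"
  assumes bimorphism: "bimorphism A B C h"
begin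

lemma h_closed: "a \<in> carrier A \<Longrightarrow> b \<in> carrier B \<Longrightarrow> h a b \<in> carrier C"
  using bimorphism unfolding bimorphism_def by blast

lemma h_one: "h (eone A) (eone B) = eone C"
  using bimorphism unfolding bimorphism_def by blast

lemma h_eplus_left:
  "orth A a1 a2 \<Longrightarrow> b \<in> carrier B \<Longrightarrow>
     orth C (h a1 b) (h a2 b) \<and> h (eplus A a1 a2) b = eplus C (h a1 b) (h a2 b)"
  using bimorphism unfolding bimorphism_def by blast

lemma h_eplus_right:
  "a \<in> carrier A \<Longrightarrow> orth B b1 b2 \<Longrightarrow>
     orth C (h a b1) (h a b2) \<and> h a (eplus B b1 b2) = eplus C (h a b1) (h a b2)"
  using bimorphism unfolding bimorphism_def by blast

lemma ea_additive_h_right: "a \<in> carrier A \<Longrightarrow> ea_additive B U \<phi> \<Longrightarrow> ea_additive C U (\<lambda>Z. h a (\<phi> Z))"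
  unfolding ea_additive_def using h_eplus_right by simp

lemma h_zero_right: "a \<in> carrier A \<Longrightarrow> h a (ezero B) = ezero C"
  using h_eplus_right[of a "ezero B" "ezero B"] B.zero_right[OF B.zero_closed] C.idem_eq_zero
  by simp

lemma h_zero_left: "b \<in> carrier B \<Longrightarrow> h (ezero A) b = ezero C"
  using h_eplus_left[of "ezero A" "ezero A" b] A.zero_right[OF A.zero_closed] C.idem_eq_zero
  by simp

lemma ea_additive_row:
  assumes a: "a \<in> carrier A" and gB: "intR_obj B m gB" and T: "T \<subseteq> {1..m}"
  shows "ea_additive C (S \<times> T) (\<lambda>Z. h a (gB (Pair s -` Z)))"
proof (rule ea_additive_h_right[OF a], rule ea_additive_comp)
  show "ea_additive B {1..m} gB"
    using gB B.intR_obj_iff by blast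
qed (use T in auto)

definition rectangle_extension ::
  "(nat set \<Rightarrow> 'a) \<Rightarrow> (nat set \<Rightarrow> 'b) \<Rightarrow> nat set \<Rightarrow> nat set \<Rightarrow> ((nat \<times> nat) set \<Rightarrow> 'c) \<Rightarrow> bool" where
  "rectangle_extension gA gB S T \<phi> \<longleftrightarrow> ea_additive C (S \<times> T) \<phi> \<and>
     (\<forall>i\<in>S. \<forall>j\<in>T. \<phi> {(i, j)} = h (gA {i}) (gB {j})) \<and> \<phi> (S \<times> T) = h (gA S) (gB T)"

lemma rectangle_extension_empty:
  assumes gA: "intR_obj A n gA" and gB: "intR_obj B m gB" and T: "T \<subseteq> {1..m}"
  shows "rectangle_extension gA gB {} T (\<lambda>_. ezero C)"
proof -
  have "ea_additive C {} (\<lambda>_. ezero C)"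
    unfolding ea_additive_def using C.zero_right[OF C.zero_closed] by simp
  moreover have "gA {} = ezero A" "gB T \<in> carrier B"
    using A.ea_additive_empty[of _ gA] B.ea_additive_closed[of _ gB, OF _ T] gA gB
    unfolding A.intR_obj_iff B.intR_obj_iff by blast+
  ultimately show ?thesis
    unfolding rectangle_extension_def using h_zero_left by auto
qed

lemma rectangle_extension_insert:
  assumes gA: "intR_obj A n gA" and gB: "intR_obj B m gB" and T: "T \<subseteq> {1..m}"
    and s: "{s} \<subseteq> {1..n}" "s \<notin> S" and S: "S \<subseteq> {1..n}"
    and \<phi>: "rectangle_extension gA gB S T \<phi>"
  defines "\<rho> \<equiv> \<lambda>Z. h (gA {s}) (gB (Pair s -` Z))"
  shows "rectangle_extension gA gB (insert s S) T
    (\<lambda>Z. eplus C (\<rho> (Z \<inter> {s} \<times> T)) (\<phi> (Z \<inter> S \<times> T)))"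
proof -
  have gA': "ea_additive A {1..n} gA" and gB': "ea_additive B {1..m} gB"
    using gA gB A.intR_obj_iff B.intR_obj_iff by blast+
  have \<phi>_add: "ea_additive C (S \<times> T) \<phi>"
    and \<phi>_single: "\<forall>i\<in>S. \<forall>j\<in>T. \<phi> {(i, j)} = h (gA {i}) (gB {j})"
    and \<phi>_total: "\<phi> (S \<times> T) = h (gA S) (gB T)"
    using \<phi> unfolding rectangle_extension_def by blast+
  have \<rho>: "ea_additive C ({s} \<times> T) \<rho>"
    unfolding \<rho>_def by (rule ea_additive_row[OF A.ea_additive_closed[OF gA' s(1)] gB T])
  have row: "Pair s -` ({s} \<times> T) = T" "Pair s -` {(s, j)} = {j}" for j
    by auto
  have \<rho>_total: "\<rho> ({s} \<times> T) = h (gA {s}) (gB T)"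
    and \<rho>_single: "\<rho> {(s, j)} = h (gA {s}) (gB {j})" for j
    unfolding \<rho>_def row by simp_all
  have split: "orth A (gA {s}) (gA S) \<and> gA (insert s S) = eplus A (gA {s}) (gA S)"
    using ea_additiveD[OF gA' s(1) S] s(2) by simp
  then have orth_rows: "orth C (\<rho> ({s} \<times> T)) (\<phi> (S \<times> T))"
    and total: "h (gA (insert s S)) (gB T) = eplus C (\<rho> ({s} \<times> T)) (\<phi> (S \<times> T))"
    using h_eplus_left[OF conjunct1[OF split] B.ea_additive_closed[OF gB' T]]
    unfolding \<rho>_total \<phi>_total by simp_all
  have rows: "{s} \<times> T \<inter> S \<times> T = {}" "insert s S \<times> T = {s} \<times> T \<union> S \<times> T"
    using s(2) by auto
  note glued = C.ea_additive_glue[OF \<rho> \<phi>_add rows(1) orth_rows]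
  show ?thesis
    unfolding rectangle_extension_def
  proof (intro conjI ballI)
    show "ea_additive C (insert s S \<times> T) (\<lambda>Z. eplus C (\<rho> (Z \<inter> {s} \<times> T)) (\<phi> (Z \<inter> S \<times> T)))"
      unfolding rows(2) by (rule glued(1))
    fix i j assume i: "i \<in> insert s S" and j: "j \<in> T"
    show "eplus C (\<rho> ({(i, j)} \<inter> {s} \<times> T)) (\<phi> ({(i, j)} \<inter> S \<times> T)) = h (gA {i}) (gB {j})"
    proof (cases "i = s")
      case True
      then show ?thesis
        using glued(2)[of "{(i, j)}"] \<rho>_single j by simp
    next
      case False
      then show ?thesis
        using glued(3)[of "{(i, j)}"] \<phi>_single i j by simp
    qed
  next
    show "eplus C (\<rho> (insert s S \<times> T \<inter> {s} \<times> T)) (\<phi> (insert s S \<times> T \<inter> S \<times> T)) =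
        h (gA (insert s S)) (gB T)"
      using total s(2) by (simp add: Int_absorb1 Int_absorb2 rows(2))
  qed
qed

lemma ex_rectangle_extension:
  assumes gA: "intR_obj A n gA" and gB: "intR_obj B m gB" and T: "T \<subseteq> {1..m}"
  shows "S \<subseteq> {1..n} \<Longrightarrow> \<exists>\<phi>. rectangle_extension gA gB S T \<phi>"
proof (induction S rule: infinite_finite_induct)
  case (infinite S)
  then show ?case using finite_subset by blast
next
  case empty
  then show ?case using rectangle_extension_empty[OF gA gB T] by blast
next
  case (insert s S)
  then show ?case using rectangle_extension_insert[OF gA gB T] by blast
qed

lemma cocone_of_bimorphism_rectangle:
  assumes gA: "intR_obj A n gA" and gB: "intR_obj B m gB" and S: "S \<subseteq> {1..n}" and T: "T \<subseteq> {1..m}"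
  shows "ea_additive C (S \<times> T) (cocone_of_bimorphism C h n gA m gB) \<and>
    cocone_of_bimorphism C h n gA m gB (S \<times> T) = h (gA S) (gB T)"
proof -
  obtain \<phi> where \<phi>: "ea_additive C (S \<times> T) \<phi>"
    and \<phi>_single: "\<forall>i\<in>S. \<forall>j\<in>T. \<phi> {(i, j)} = h (gA {i}) (gB {j})"
    and \<phi>_total: "\<phi> (S \<times> T) = h (gA S) (gB T)"
    using ex_rectangle_extension[OF gA gB T S] unfolding rectangle_extension_def by blast
  have "finite (S \<times> T)"
    using finite_subset[OF S] finite_subset[OF T] by blast
  have "\<phi> X = cocone_of_bimorphism C h n gA m gB X" if X: "X \<subseteq> S \<times> T" for X
  proof -
    have "\<phi> X = esum C (\<lambda>(i, j). h (gA {i}) (gB {j})) X"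
      by (rule C.ea_additive_eq_esum_points[OF \<phi> \<open>finite (S \<times> T)\<close> X]) (use \<phi>_single X in auto)
    then show ?thesis
      by (simp add: cocone_of_bimorphism_def)
  qed
  then show ?thesis
    using ea_additive_cong[OF _ \<phi>] \<phi>_total by (metis order_refl)
qed

lemma cocone_of_bimorphism_morphism:
  assumes gA: "intR_obj A n gA" and gB: "intR_obj B m gB"
  shows "ea_morphism (bool2_ea n m) C (cocone_of_bimorphism C h n gA m gB)"
  using cocone_of_bimorphism_rectangle[OF gA gB order_refl order_refl] gA gB h_one
  unfolding bool2_ea_def C.ea_morphism_powerset_iff A.intR_obj_iff B.intR_obj_iff by simp

lemma cocone_of_bimorphism_natural:
  assumes fA: "intR_arrow A n gA n' gA' fA" and fB: "intR_arrow B m gB m' gB' fB"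
    and X: "X \<subseteq> {1..n} \<times> {1..m}"
  shows "cocone_of_bimorphism C h n' gA' m' gB' (bool_coprod fA fB X) = cocone_of_bimorphism C h n gA m gB X"
proof -
  have objs: "intR_obj A n' gA'" "intR_obj B m' gB'" and homs: "bool_hom n n' fA" "bool_hom m m' fB"
    and comm: "\<And>Y. Y \<subseteq> {1..n} \<Longrightarrow> gA' (fA Y) = gA Y" "\<And>Y. Y \<subseteq> {1..m} \<Longrightarrow> gB' (fB Y) = gB Y"
    using fA fB unfolding intR_arrow_def by auto
  let ?v' = "cocone_of_bimorphism C h n' gA' m' gB'"
  have "ea_additive C ({1..n} \<times> {1..m}) (\<lambda>Z. ?v' (bool_coprod fA fB Z))"
  proof (rule ea_additive_comp)
    show "ea_additive C ({1..n'} \<times> {1..m'}) ?v'"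
      using cocone_of_bimorphism_rectangle[OF objs order_refl order_refl] by blast
  qed (use bool_coprod_closed[OF homs] bool_coprod_disjoint[OF homs] bool_coprod_union in auto)
  then have "?v' (bool_coprod fA fB X) = esum C (\<lambda>(i, j). h (gA {i}) (gB {j})) X"
  proof (rule C.ea_additive_eq_esum_points[OF _ _ X])
    fix p assume "p \<in> X"
    then obtain i j where p: "p = (i, j)" "{i} \<subseteq> {1..n}" "{j} \<subseteq> {1..m}"
      using X by auto
    have "?v' (fA {i} \<times> fB {j}) = h (gA' (fA {i})) (gB' (fB {j}))"
      using cocone_of_bimorphism_rectangle[OF objs bool_hom_closed[OF homs(1) p(2)]
          bool_hom_closed[OF homs(2) p(3)]] by blast
    then show "?v' (bool_coprod fA fB {p}) = (\<lambda>(i, j). h (gA {i}) (gB {j})) p"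
      using comm p by simp
  qed simp
  then show ?thesis
    by (simp add: cocone_of_bimorphism_def)
qed

lemma cocone_cocone_of_bimorphism: "cocone A B C (cocone_of_bimorphism C h)"
  unfolding cocone_def using cocone_of_bimorphism_morphism cocone_of_bimorphism_natural by blast

lemma bimorphism_of_cocone_of_bimorphism:
  assumes "a \<in> carrier A" "b \<in> carrier B"
  shows "bimorphism_of_cocone A B (cocone_of_bimorphism C h) a b = h a b"
  unfolding bimorphism_of_cocone_def cocone_of_bimorphism_def
  using C.esum_singleton[of "\<lambda>(i, j). h (observable A a {i}) (observable B b {j})" "(1, 1)"]
    h_closed[OF assms] by (simp add: observable_def)

lemma cocone_of_bimorphism_comp:
  assumes C': "effect_algebra C'" and f: "ea_morphism C C' f"
    and fh: "\<forall>a\<in>carrier A. \<forall>b\<in>carrier B. f (h a b) = h' a b"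
    and gA: "intR_obj A n gA" and gB: "intR_obj B m gB" and X: "X \<subseteq> {1..n} \<times> {1..m}"
  shows "f (cocone_of_bimorphism C h n gA m gB X) = cocone_of_bimorphism C' h' n gA m gB X"
proof -
  let ?v = "cocone_of_bimorphism C h n gA m gB"
  have "ea_additive C' ({1..n} \<times> {1..m}) (\<lambda>Z. f (?v Z))"
    using cocone_of_bimorphism_rectangle[OF gA gB order_refl order_refl]
    by (intro ea_additive_morphism_comp[OF _ f]) blast
  then have "f (?v X) = esum C' (\<lambda>(i, j). h' (gA {i}) (gB {j})) X"
  proof (rule effect_alg.ea_additive_eq_esum_points[OF effect_alg.intro[OF C'] _ _ X])
    fix p assume "p \<in> X"
    then obtain i j where p: "p = (i, j)" "{i} \<subseteq> {1..n}" "{j} \<subseteq> {1..m}"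
      using X by auto
    then have "gA {i} \<in> carrier A" "gB {j} \<in> carrier B"
      using A.ea_additive_closed[of _ gA "{i}"] B.ea_additive_closed[of _ gB "{j}"] gA gB
      unfolding A.intR_obj_iff B.intR_obj_iff by blast+
    then show "f (?v {p}) = (\<lambda>(i, j). h' (gA {i}) (gB {j})) p"
      using cocone_of_bimorphism_rectangle[OF gA gB p(2,3)] fh p(1) by simp
  qed simp
  then show ?thesis
    by (simp add: cocone_of_bimorphism_def)
qed

end

section \<open>The bimorphism of a cocone\<close>

definition bool_hom_of_subset :: "nat \<Rightarrow> nat set \<Rightarrow> nat set \<Rightarrow> nat set" where
  "bool_hom_of_subset n S X = (if 1 \<in> X then S else {}) \<union> (if 2 \<in> X then {1..n} - S else {})"

lemma bool_hom_bool_hom_of_subset: "S \<subseteq> {1..n} \<Longrightarrow> bool_hom 2 n (bool_hom_of_subset n S)"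
  unfolding bool_hom_def bool_hom_of_subset_def by auto

lemma subset_two_cases:
  assumes "X \<subseteq> {1..2::nat}"
  shows "X = {} \<or> X = {1} \<or> X = {2} \<or> X = {1, 2}"
proof -
  have "X \<subseteq> {1, 2}"
    using assms by auto
  then show ?thesis
    by auto
qed

context effect_alg
begin

lemma observable_eq_eplus:
  assumes a: "a \<in> carrier E" and X: "X \<subseteq> {1..2}"
  shows "observable E a X =
    eplus E (if 1 \<in> X then a else ezero E) (if 2 \<in> X then ecompl E a else ezero E)"
  using subset_two_cases[OF X] zero_left zero_right zero_closed ecompl_spec[OF a] a
  by (elim disjE) (simp_all add: observable_def)

lemma observable_intR_obj:
  assumes a: "a \<in> carrier E"
  shows "intR_obj E 2 (observable E a)"
proof -
  have "ea_additive E {1..2::nat} (\<lambda>X.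
      eplus E (if 1 \<in> X then a else ezero E) (if 2 \<in> X then ecompl E a else ezero E))"
    using ecompl_spec[OF a] a by (intro ea_additive_eplus ea_additive_indicator) auto
  then have "ea_additive E {1..2} (observable E a)"
    by (rule ea_additive_cong[rotated]) (simp add: observable_eq_eplus[OF a])
  moreover have "observable E a {1..2} = eone E"
    using observable_eq_eplus[OF a order_refl] ecompl_spec[OF a] by simp
  ultimately show ?thesis
    unfolding intR_obj_iff ..
qed

lemma three_point_intR_obj:
  assumes a: "orth E a1 a2"
  shows "\<exists>g. intR_obj E 3 g \<and> g {1} = a1 \<and> g {2} = a2"
proof -
  define c where "c = ecompl E (eplus E a1 a2)"
  have carrier: "a1 \<in> carrier E" "a2 \<in> carrier E" "eplus E a1 a2 \<in> carrier E"
    using orth_closed[OF a] by auto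
  have c: "c \<in> carrier E" "orth E (eplus E a1 a2) c" "eplus E (eplus E a1 a2) c = eone E"
    using ecompl_spec[OF carrier(3)] unfolding c_def by auto
  define g where "g X = eplus E (eplus E (if 1 \<in> X then a1 else ezero E)
      (if 2 \<in> X then a2 else ezero E)) (if 3 \<in> X then c else ezero E)" for X :: "nat set"
  have "ea_additive E {1..3} g"
    unfolding g_def using a carrier c by (intro ea_additive_eplus ea_additive_indicator) auto
  moreover have "g {1..3} = eone E" "g {1} = a1" "g {2} = a2"
    unfolding g_def using c carrier zero_right zero_left zero_closed by auto
  ultimately show ?thesis
    unfolding intR_obj_iff by blast
qed

lemma intR_arrow_of_subset:
  assumes g: "intR_obj E n g" and S: "S \<subseteq> {1..n}"
  shows "intR_arrow E 2 (observable E (g S)) n g (bool_hom_of_subset n S)"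
proof -
  have g': "ea_additive E {1..n} g" "g {1..n} = eone E"
    using g unfolding intR_obj_iff by auto
  have "g (bool_hom_of_subset n S X) = observable E (g S) X" if X: "X \<subseteq> {1..2}" for X
  proof -
    have "S \<union> ({1..n} - S) = {1..n}"
      using S by blast
    then have "g {} = ezero E" "g ({1..n} - S) = ecompl E (g S)" "g (S \<union> ({1..n} - S)) = eone E"
      using ea_additive_empty[OF g'(1)] ea_additive_compl[OF g' S] g'(2) by simp_all
    then show ?thesis
      using subset_two_cases[OF X]
      by (elim disjE) (simp_all add: bool_hom_of_subset_def observable_def)
  qed
  moreover have "intR_obj E 2 (observable E (g S))"
    using observable_intR_obj ea_additive_closed[OF g'(1) S] by blast
  ultimately show ?thesis
    unfolding intR_arrow_def using g bool_hom_bool_hom_of_subset[OF S] by simp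
qed

end

locale ea_cocone = A: effect_alg A + B: effect_alg B + C: effect_alg C
  for A :: "'a effalg" and B :: "'b effalg" and C :: "'c effalg" +
  fixes v :: "('a, 'b, 'c) cocone_fam"
  assumes cocone: "cocone A B C v"
begin

lemma component_additive:
  "intR_obj A n gA \<Longrightarrow> intR_obj B m gB \<Longrightarrow>
     ea_additive C ({1..n} \<times> {1..m}) (v n gA m gB) \<and> v n gA m gB ({1..n} \<times> {1..m}) = eone C"
  using cocone unfolding cocone_def bool2_ea_def C.ea_morphism_powerset_iff by blast

lemma component_natural:
  "intR_arrow A n gA n' gA' fA \<Longrightarrow> intR_arrow B m gB m' gB' fB \<Longrightarrow> X \<subseteq> {1..n} \<times> {1..m} \<Longrightarrow>
     v n' gA' m' gB' (bool_coprod fA fB X) = v n gA m gB X"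
  using cocone unfolding cocone_def by blast

lemma component_rectangle:
  assumes gA: "intR_obj A n gA" and gB: "intR_obj B m gB" and S: "S \<subseteq> {1..n}" and T: "T \<subseteq> {1..m}"
  shows "v n gA m gB (S \<times> T) = bimorphism_of_cocone A B v (gA S) (gB T)"
proof -
  have "bool_coprod (bool_hom_of_subset n S) (bool_hom_of_subset m T) {(1, 1)} = S \<times> T"
    by (simp add: bool_hom_of_subset_def)
  then show ?thesis
    using component_natural[OF A.intR_arrow_of_subset[OF gA S] B.intR_arrow_of_subset[OF gB T],
        of "{(1, 1)}"]
    unfolding bimorphism_of_cocone_def by simp
qed

lemma cocone_of_bimorphism_of_cocone:
  assumes gA: "intR_obj A n gA" and gB: "intR_obj B m gB" and X: "X \<subseteq> {1..n} \<times> {1..m}"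
  shows "cocone_of_bimorphism C (bimorphism_of_cocone A B v) n gA m gB X = v n gA m gB X"
proof -
  have "v n gA m gB X = esum C (\<lambda>(i, j). bimorphism_of_cocone A B v (gA {i}) (gB {j})) X"
  proof (rule C.ea_additive_eq_esum_points[OF conjunct1[OF component_additive[OF gA gB]] _ X])
    fix p assume "p \<in> X"
    then obtain i j where p: "p = (i, j)" "{i} \<subseteq> {1..n}" "{j} \<subseteq> {1..m}"
      using X by auto
    then show "v n gA m gB {p} = (\<lambda>(i, j). bimorphism_of_cocone A B v (gA {i}) (gB {j})) p"
      using component_rectangle[OF gA gB p(2,3)] by simp
  qed simp
  then show ?thesis
    by (simp add: cocone_of_bimorphism_def)
qed

lemma bimorphism_of_cocone_additive_left:
  assumes g: "intR_obj A n g" and b: "b \<in> carrier B"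
  shows "ea_additive C {1..n} (\<lambda>S. bimorphism_of_cocone A B v (g S) b)"
proof -
  note ob = B.observable_intR_obj[OF b]
  have "ea_additive C {1..n} (\<lambda>S. v n g 2 (observable B b) (S \<times> {1}))"
    by (rule ea_additive_comp[OF conjunct1[OF component_additive[OF g ob]]]) auto
  then show ?thesis
    by (rule ea_additive_cong[rotated]) (simp add: component_rectangle[OF g ob] observable_def)
qed

lemma bimorphism_of_cocone_additive_right:
  assumes a: "a \<in> carrier A" and g: "intR_obj B m g"
  shows "ea_additive C {1..m} (\<lambda>T. bimorphism_of_cocone A B v a (g T))"
proof -
  note oa = A.observable_intR_obj[OF a]
  have "ea_additive C {1..m} (\<lambda>T. v 2 (observable A a) m g ({1} \<times> T))"
    by (rule ea_additive_comp[OF conjunct1[OF component_additive[OF oa g]]]) auto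
  then show ?thesis
    by (rule ea_additive_cong[rotated]) (simp add: component_rectangle[OF oa g] observable_def)
qed

lemma bimorphism_bimorphism_of_cocone: "bimorphism A B C (bimorphism_of_cocone A B v)"
  unfolding bimorphism_def
proof (intro conjI; (intro allI impI ballI)?)
  fix a b assume "a \<in> carrier A" "b \<in> carrier B"
  then have "ea_additive C ({1..2} \<times> {1..2}) (v 2 (observable A a) 2 (observable B b))"
    using component_additive A.observable_intR_obj B.observable_intR_obj by blast
  then show "bimorphism_of_cocone A B v a b \<in> carrier C"
    unfolding bimorphism_of_cocone_def by (rule C.ea_additive_closed) simp
next
  note oa = A.observable_intR_obj[OF A.one_closed] and ob = B.observable_intR_obj[OF B.one_closed]
  then show "bimorphism_of_cocone A B v (eone A) (eone B) = eone C"
    using component_additive[OF oa ob] component_rectangle[OF oa ob order_refl order_refl]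
    unfolding A.intR_obj_iff B.intR_obj_iff by simp
next
  fix a1 a2 b assume "orth A a1 a2 \<and> b \<in> carrier B"
  then obtain g where g: "intR_obj A 3 g" "g {1} = a1" "g {2} = a2" and b: "b \<in> carrier B"
    using A.three_point_intR_obj by blast
  have "g ({1} \<union> {2}) = eplus A a1 a2"
    using ea_additiveD[of A "{1..3}" g "{1}" "{2}"] g unfolding A.intR_obj_iff by simp
  then show "orth C (bimorphism_of_cocone A B v a1 b) (bimorphism_of_cocone A B v a2 b) \<and>
      bimorphism_of_cocone A B v (eplus A a1 a2) b =
      eplus C (bimorphism_of_cocone A B v a1 b) (bimorphism_of_cocone A B v a2 b)"
    using ea_additiveD[OF bimorphism_of_cocone_additive_left[OF g(1) b], of "{1}" "{2}"] g by simp
next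
  fix a b1 b2 assume "a \<in> carrier A \<and> orth B b1 b2"
  then obtain g where g: "intR_obj B 3 g" "g {1} = b1" "g {2} = b2" and a: "a \<in> carrier A"
    using B.three_point_intR_obj by blast
  have "g ({1} \<union> {2}) = eplus B b1 b2"
    using ea_additiveD[of B "{1..3}" g "{1}" "{2}"] g unfolding B.intR_obj_iff by simp
  then show "orth C (bimorphism_of_cocone A B v a b1) (bimorphism_of_cocone A B v a b2) \<and>
      bimorphism_of_cocone A B v a (eplus B b1 b2) =
      eplus C (bimorphism_of_cocone A B v a b1) (bimorphism_of_cocone A B v a b2)"
    using ea_additiveD[OF bimorphism_of_cocone_additive_right[OF a g(1)], of "{1}" "{2}"] g by simp
qed

end

lemma bimorphism_morphism_iff_cocone_morphism:
  assumes h: "ea_bimorphism A B C h" and h': "ea_bimorphism A B C' h'" and f: "ea_morphism C C' f"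
  shows "(\<forall>a\<in>carrier A. \<forall>b\<in>carrier B. f (h a b) = h' a b) \<longleftrightarrow>
    (\<forall>n gA m gB X. intR_obj A n gA \<and> intR_obj B m gB \<and> X \<subseteq> {1..n} \<times> {1..m} \<longrightarrow>
       f (cocone_of_bimorphism C h n gA m gB X) = cocone_of_bimorphism C' h' n gA m gB X)"
proof
  assume fh: "\<forall>a\<in>carrier A. \<forall>b\<in>carrier B. f (h a b) = h' a b"
  have C': "effect_algebra C'"
    using effect_alg.effect_algebra[OF ea_bimorphism.axioms(3)[OF h']] .
  show "\<forall>n gA m gB X. intR_obj A n gA \<and> intR_obj B m gB \<and> X \<subseteq> {1..n} \<times> {1..m} \<longrightarrow>
       f (cocone_of_bimorphism C h n gA m gB X) = cocone_of_bimorphism C' h' n gA m gB X"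
    using ea_bimorphism.cocone_of_bimorphism_comp[OF h C' f fh] by blast
next
  assume H: "\<forall>n gA m gB X. intR_obj A n gA \<and> intR_obj B m gB \<and> X \<subseteq> {1..n} \<times> {1..m} \<longrightarrow>
       f (cocone_of_bimorphism C h n gA m gB X) = cocone_of_bimorphism C' h' n gA m gB X"
  show "\<forall>a\<in>carrier A. \<forall>b\<in>carrier B. f (h a b) = h' a b"
  proof (intro ballI)
    fix a b assume a: "a \<in> carrier A" and b: "b \<in> carrier B"
    have "intR_obj A 2 (observable A a)" "intR_obj B 2 (observable B b)"
      using effect_alg.observable_intR_obj[OF ea_bimorphism.axioms(1)[OF h] a]
        effect_alg.observable_intR_obj[OF ea_bimorphism.axioms(2)[OF h] b] .
    then have "f (bimorphism_of_cocone A B (cocone_of_bimorphism C h) a b) =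
        bimorphism_of_cocone A B (cocone_of_bimorphism C' h') a b"
      using H unfolding bimorphism_of_cocone_def by simp
    then show "f (h a b) = h' a b"
      using ea_bimorphism.bimorphism_of_cocone_of_bimorphism[OF h a b]
        ea_bimorphism.bimorphism_of_cocone_of_bimorphism[OF h' a b] by simp
  qed
qed

lemma cocone_morphism_iff_bimorphism_morphism:
  assumes v: "ea_cocone A B C v" and v': "ea_cocone A B C' v'" and f: "ea_morphism C C' f"
  shows "(\<forall>n gA m gB X. intR_obj A n gA \<and> intR_obj B m gB \<and> X \<subseteq> {1..n} \<times> {1..m} \<longrightarrow>
       f (v n gA m gB X) = v' n gA m gB X) \<longleftrightarrow>
    (\<forall>a\<in>carrier A. \<forall>b\<in>carrier B.
       f (bimorphism_of_cocone A B v a b) = bimorphism_of_cocone A B v' a b)"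
proof -
  have "ea_bimorphism A B C (bimorphism_of_cocone A B v)"
    and "ea_bimorphism A B C' (bimorphism_of_cocone A B v')"
    using ea_cocone.bimorphism_bimorphism_of_cocone[OF v] ea_cocone.axioms[OF v]
      ea_cocone.bimorphism_bimorphism_of_cocone[OF v'] ea_cocone.axioms[OF v']
    by (simp_all add: ea_bimorphism_def ea_bimorphism_axioms_def)
  note iff = bimorphism_morphism_iff_cocone_morphism[OF this f]
  have eq: "cocone_of_bimorphism C (bimorphism_of_cocone A B v) n gA m gB X = v n gA m gB X"
    "cocone_of_bimorphism C' (bimorphism_of_cocone A B v') n gA m gB X = v' n gA m gB X"
    if "intR_obj A n gA" "intR_obj B m gB" "X \<subseteq> {1..n} \<times> {1..m}" for n gA m gB X
    using ea_cocone.cocone_of_bimorphism_of_cocone[OF v, of n gA m gB X]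
      ea_cocone.cocone_of_bimorphism_of_cocone[OF v', of n gA m gB X] that by simp_all
  show ?thesis
    unfolding iff by (simp only: eq cong: imp_cong)
qed

theorem mainTheorem5:
  fixes A :: "'a effalg" and B :: "'b effalg"
  assumes "effect_algebra A" and "effect_algebra B"
  shows
    \<comment> \<open>on objects: for each apex C, C-valued bimorphisms \<leftrightarrow> cocones with apex C, mutually inverse\<close>
    "(\<forall>(C :: 'c effalg) h. effect_algebra C \<and> bimorphism A B C h \<longrightarrow>
        cocone A B C (cocone_of_bimorphism C h) \<and>
        (\<forall>a\<in>carrier A. \<forall>b\<in>carrier B.
           bimorphism_of_cocone A B (cocone_of_bimorphism C h) a b = h a b)) \<and>
     (\<forall>(C :: 'c effalg) v. effect_algebra C \<and> cocone A B C v \<longrightarrow>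
        bimorphism A B C (bimorphism_of_cocone A B v) \<and>
        (\<forall>n gA m gB X. intR_obj A n gA \<and> intR_obj B m gB \<and> X \<subseteq> {1..n} \<times> {1..m} \<longrightarrow>
           cocone_of_bimorphism C (bimorphism_of_cocone A B v) n gA m gB X = v n gA m gB X)) \<and>
     \<comment> \<open>on morphisms: the same EA map f is a morphism on both sides\<close>
     (\<forall>(C :: 'c effalg) (C' :: 'd effalg) h h' f.
        effect_algebra C \<and> effect_algebra C' \<and> bimorphism A B C h \<and> bimorphism A B C' h' \<and>
        ea_morphism C C' f \<longrightarrow>
        ((\<forall>a\<in>carrier A. \<forall>b\<in>carrier B. f (h a b) = h' a b) \<longleftrightarrow>
         (\<forall>n gA m gB X. intR_obj A n gA \<and> intR_obj B m gB \<and> X \<subseteq> {1..n} \<times> {1..m} \<longrightarrow>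
            f (cocone_of_bimorphism C h n gA m gB X) = cocone_of_bimorphism C' h' n gA m gB X))) \<and>
     (\<forall>(C :: 'c effalg) (C' :: 'd effalg) v v' f.
        effect_algebra C \<and> effect_algebra C' \<and> cocone A B C v \<and> cocone A B C' v' \<and>
        ea_morphism C C' f \<longrightarrow>
        ((\<forall>n gA m gB X. intR_obj A n gA \<and> intR_obj B m gB \<and> X \<subseteq> {1..n} \<times> {1..m} \<longrightarrow>
            f (v n gA m gB X) = v' n gA m gB X) \<longleftrightarrow>
         (\<forall>a\<in>carrier A. \<forall>b\<in>carrier B.
            f (bimorphism_of_cocone A B v a b) = bimorphism_of_cocone A B v' a b)))"
proof -
  have bim: "\<And>(C :: 'x effalg) h. effect_algebra C \<Longrightarrow> bimorphism A B C h \<Longrightarrow> ea_bimorphism A B C h"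
    by (simp add: ea_bimorphism_def ea_bimorphism_axioms_def effect_alg_def assms)
  have coc: "\<And>(C :: 'x effalg) v. effect_algebra C \<Longrightarrow> cocone A B C v \<Longrightarrow> ea_cocone A B C v"
    by (simp add: ea_cocone_def ea_cocone_axioms_def effect_alg_def assms)
  show ?thesis
    by (intro conjI allI impI ballI; elim conjE)
      (rule ea_bimorphism.cocone_cocone_of_bimorphism[OF bim]
        ea_bimorphism.bimorphism_of_cocone_of_bimorphism[OF bim]
        ea_cocone.bimorphism_bimorphism_of_cocone[OF coc]
        ea_cocone.cocone_of_bimorphism_of_cocone[OF coc]
        bimorphism_morphism_iff_cocone_morphism[OF bim bim]
        cocone_morphism_iff_bimorphism_morphism[OF coc coc]; assumption)+
qed

end
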